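(* Let $c$ be the ellipse $x^2/a_c^2+y^2/b_c^2=1$, $a_c>b_c>0$, and $e$ the confocal ellipse with semiaxes $a_e=\sqrt{a_c^2+k_e}$, $b_e=\sqrt{b_c^2+k_e}$, $k_e>0$. Put $\mathbf t_c(t)=(-a_c\sin t,\,b_c\cos t)$ and $k_h(t)=-\Vert\mathbf t_c(t)\Vert^2$. Let $P_1P_2\dots$ be a billiard in $e$ with caustic $c$, where $P_i=(a_e\cos t_i,\,b_e\sin t_i)$ and $Q_i=(a_c\cos t_i',\,b_c\sin t_i')$ is the point of contact of the side $P_iP_{i+1}$ with $c$. Then \[r_i:=\overline{Q_{i-1}P_i}=\frac{\Vert\mathbf t_c(t_{i-1}')\Vert\,\Vert\mathbf t_c(t_i)\Vert\sqrt{k_e}}{a_cb_c},\qquad l_i:=\overline{P_iQ_i}=\frac{\Vert\mathbf t_c(t_i)\Vert\,\Vert\mathbf t_c(t_i')\Vert\sqrt{k_e}}{a_cb_c}.\] Moreover, the canonical motion of the billiard induces for the side $P_iP_{i+1}$ the instant angular velocity \[\omega_i=\frac{a_cb_c}{\Vert\mathbf t_c(t_i')\Vert}=\frac{a_cb_c}{\sqrt{-k_h(t_i')}}.\]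
   Context: A billiard in $e$ with caustic $c$ is a sequence of points $P_1,P_2,\dots$ on $e$ such that each line $P_iP_{i+1}$ is tangent to $c$ and $P_{i-1}P_i$, $P_iP_{i+1}$ are the two tangents from $P_i$ to $c$; it is traversed counterclockwise. The canonical billiard motion is the motion of the billiard (all vertices staying on $e$ and all sides tangent to $c$) parametrized by a parameter $u$ such that every vertex $P=(a_e\cos t,b_e\sin t)$ moves with $\frac{dt}{du}=\Vert\mathbf t_c(t)\Vert=\sqrt{a_c^2\sin^2t+b_c^2\cos^2t}$, i.e. with velocity vector $\Vert\mathbf t_c(t)\Vert(-a_e\sin t,\,b_e\cos t)$; angular velocities are derivatives with respect to $u$. *)

theory Defs
  imports "HOL-Analysis.Analysis"
begin

definition ell :: "real \<Rightarrow> real \<Rightarrow> real \<Rightarrow> real \<times> real" where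
  "ell a b s = (a * cos s, b * sin s)"

definition tc :: "real \<Rightarrow> real \<Rightarrow> real \<Rightarrow> real \<times> real" where
  "tc ac bc s = (- ac * sin s, bc * cos s)"

definition kh :: "real \<Rightarrow> real \<Rightarrow> real \<Rightarrow> real" where
  "kh ac bc s = - (norm (tc ac bc s))\<^sup>2"

definition cross :: "real \<times> real \<Rightarrow> real \<times> real \<Rightarrow> real" where
  "cross v w = fst v * snd w - snd v * fst w"

definition ae :: "real \<Rightarrow> real \<Rightarrow> real" where "ae ac ke = sqrt (ac\<^sup>2 + ke)"
definition be :: "real \<Rightarrow> real \<Rightarrow> real" where "be bc ke = sqrt (bc\<^sup>2 + ke)"

definition vert :: "real \<Rightarrow> real \<Rightarrow> real \<Rightarrow> (nat \<Rightarrow> real) \<Rightarrow> nat \<Rightarrow> real \<times> real" where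
  "vert ac bc ke t i = ell (ae ac ke) (be bc ke) (t i)"

definition on_tangent :: "real \<Rightarrow> real \<Rightarrow> real \<Rightarrow> real \<times> real \<Rightarrow> bool" where
  "on_tangent ac bc s X \<longleftrightarrow> cross (X - ell ac bc s) (tc ac bc s) = 0"

text \<open>Billiard in e with caustic c (vertices P_0, P_1, ...): consecutive vertices distinct,
  each side is a tangent line of c, consecutive sides through a vertex are the two
  (distinct) tangents from it, traversed counterclockwise (c, hence the centre, lies to
  the left of each directed side).\<close>
definition is_billiard :: "real \<Rightarrow> real \<Rightarrow> real \<Rightarrow> (nat \<Rightarrow> real) \<Rightarrow> bool" where
  "is_billiard ac bc ke t \<longleftrightarrow>
     (\<forall>i. vert ac bc ke t i \<noteq> vert ac bc ke t (Suc i)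
        \<and> (\<exists>s. on_tangent ac bc s (vert ac bc ke t i) \<and> on_tangent ac bc s (vert ac bc ke t (Suc i)))
        \<and> cross (vert ac bc ke t i) (vert ac bc ke t (Suc i)) > 0
        \<and> \<not> collinear {vert ac bc ke t i, vert ac bc ke t (Suc i), vert ac bc ke t (Suc (Suc i))})"

definition contact_params :: "real \<Rightarrow> real \<Rightarrow> real \<Rightarrow> (nat \<Rightarrow> real) \<Rightarrow> (nat \<Rightarrow> real) \<Rightarrow> bool" where
  "contact_params ac bc ke t tp \<longleftrightarrow>
     (\<forall>i. on_tangent ac bc (tp i) (vert ac bc ke t i) \<and> on_tangent ac bc (tp i) (vert ac bc ke t (Suc i)))"

definition canonical_motion :: "real \<Rightarrow> real \<Rightarrow> real \<Rightarrow> real set \<Rightarrow> (real \<Rightarrow> nat \<Rightarrow> real) \<Rightarrow> (real \<Rightarrow> nat \<Rightarrow> real) \<Rightarrow> bool" where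
  "canonical_motion ac bc ke I T TP \<longleftrightarrow>
     (\<forall>u\<in>I. is_billiard ac bc ke (T u) \<and> contact_params ac bc ke (T u) (TP u))
     \<and> (\<forall>u\<in>I. \<forall>i. ((\<lambda>v. T v i) has_real_derivative norm (tc ac bc (T u i))) (at u))"

definition angle_lift :: "real set \<Rightarrow> (real \<Rightarrow> real \<times> real) \<Rightarrow> (real \<Rightarrow> real) \<Rightarrow> bool" where
  "angle_lift I d \<theta> \<longleftrightarrow> continuous_on I \<theta> \<and>
     (\<forall>u\<in>I. d u = (norm (d u) * cos (\<theta> u), norm (d u) * sin (\<theta> u)))"

definition has_angular_velocity :: "real set \<Rightarrow> (real \<Rightarrow> real \<times> real) \<Rightarrow> real \<Rightarrow> real \<Rightarrow> bool" where
  "has_angular_velocity I d w u0 \<longleftrightarrow>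
     (\<exists>\<theta>. angle_lift I d \<theta>) \<and>
     (\<forall>\<theta>. angle_lift I d \<theta> \<longrightarrow> (\<theta> has_real_derivative w) (at u0))"

end

theory Submission
  imports Defs
begin

(* Write a vertex P = e(t) on the tangent of c at Q = c(s) as P = Q + l t_c(s).  Confocality
   gives (a_c b_c l)^2 = k_e ||t_c(t)||^2, which is the length formula for both tangent segments.
   Under the canonical motion P moves with velocity ||t_c(t)|| t_e(t), and
   ||t_c(t)|| cross(t_c(s), t_e(t)) = a_c b_c l ||t_c(s)||, the sign being forced by Q lying
   inside e.  A side is (l_2 - l_1) t_c(s), so its angular velocity cross(d, d') / |d|^2 is
   a_c b_c / ||t_c(s)||. *)

lemma cross_scaleR_left: "cross (a *\<^sub>R v) w = a * cross v w"
  by (simp add: cross_def algebra_simps)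

lemma cross_scaleR_right: "cross v (a *\<^sub>R w) = a * cross v w"
  by (simp add: cross_def algebra_simps)

lemma cross_diff_right: "cross v (w - w') = cross v w - cross v w'"
  by (simp add: cross_def algebra_simps)

lemma cross_eq_0_imp_scaleR:
  assumes "cross v w = 0" and "w \<noteq> 0"
  shows "v = ((v \<bullet> w) / (norm w)\<^sup>2) *\<^sub>R w"
proof -
  obtain v1 v2 w1 w2 where v: "v = (v1, v2)" and w: "w = (w1, w2)" by fastforce
  have "v1 * w2 = v2 * w1" using assms(1) by (simp add: cross_def v w)
  moreover have "w1\<^sup>2 + w2\<^sup>2 \<noteq> 0" using assms(2) by (simp add: w zero_prod_def)
  ultimately show ?thesis
    by (simp add: v w norm_Pair inner_Pair field_simps power2_eq_square)
qed

lemma power2_eq_imp_eq_same_sign: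
  fixes x y :: "'a :: linordered_idom"
  assumes "x\<^sup>2 = y\<^sup>2" and "0 \<le> x * y"
  shows "x = y"
proof -
  have "x = y \<or> x = - y" using assms(1) by (simp add: power2_eq_iff)
  then show ?thesis
  proof
    assume "x = - y"
    with assms(2) have "y * y \<le> 0" by simp
    then have "y = 0" by (metis antisym zero_le_square mult_eq_0_iff)
    with \<open>x = - y\<close> show ?thesis by simp
  qed
qed

lemma has_vector_derivative_fst_snd:
  fixes d :: "real \<Rightarrow> real \<times> real"
  assumes "(d has_vector_derivative d') (at u)"
  shows "((\<lambda>u. fst (d u)) has_real_derivative fst d') (at u)"
    and "((\<lambda>u. snd (d u)) has_real_derivative snd d') (at u)"
  using has_derivative_fst[OF assms[unfolded has_vector_derivative_def]]
    has_derivative_snd[OF assms[unfolded has_vector_derivative_def]]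
  by (simp_all add: has_field_derivative_def mult_commute_abs)

lemma has_vector_derivative_ell: "(ell a b has_vector_derivative tc a b s) (at s)"
  unfolding ell_def[abs_def] tc_def
  by (auto intro!: has_vector_derivative_Pair derivative_eq_intros
      simp: has_real_derivative_iff_has_vector_derivative[symmetric])

lemma norm_tc_squared: "(norm (tc a b s))\<^sup>2 = a\<^sup>2 * (sin s)\<^sup>2 + b\<^sup>2 * (cos s)\<^sup>2"
  by (simp add: tc_def norm_Pair power_mult_distrib)

lemma norm_tc_pos:
  assumes "0 < a" and "0 < b"
  shows "0 < norm (tc a b s)"
proof -
  have "\<not> (sin s = 0 \<and> cos s = 0)"
    using sin_cos_squared_add[of s] by (auto simp del: sin_cos_squared_add)
  then show ?thesis using assms by (auto simp: tc_def zero_prod_def)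
qed

lemma ae_squared: "0 \<le> ke \<Longrightarrow> (ae a ke)\<^sup>2 = a\<^sup>2 + ke"
  by (simp add: ae_def)

lemma be_squared: "0 \<le> ke \<Longrightarrow> (be b ke)\<^sup>2 = b\<^sup>2 + ke"
  by (simp add: be_def)

lemma on_tangentE:
  assumes "0 < a" and "0 < b" and "on_tangent a b s X"
  obtains l where "X = ell a b s + l *\<^sub>R tc a b s"
proof
  have "tc a b s \<noteq> 0" using norm_tc_pos[OF assms(1,2)] by auto
  with assms(3) show "X = ell a b s + ((X - ell a b s) \<bullet> tc a b s / (norm (tc a b s))\<^sup>2) *\<^sub>R tc a b s"
    unfolding on_tangent_def by (metis cross_eq_0_imp_scaleR diff_add_cancel add.commute)
qed

lemma confocal_tangent_parameter:
  assumes "0 < ke"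
    and P: "ell (ae ac ke) (be bc ke) t = ell ac bc s + l *\<^sub>R tc ac bc s"
  shows "(ac * bc * l)\<^sup>2 = ke * (norm (tc ac bc t))\<^sup>2"
proof -
  have "ae ac ke * cos t = ac * cos s - l * ac * sin s" "be bc ke * sin t = bc * sin s + l * bc * cos s"
    using P by (auto simp: ell_def tc_def prod_eq_iff)
  moreover have "(ae ac ke)\<^sup>2 = ac\<^sup>2 + ke" "(be bc ke)\<^sup>2 = bc\<^sup>2 + ke"
    using \<open>0 < ke\<close> by (simp_all add: ae_squared be_squared)
  moreover have "(sin s)\<^sup>2 + (cos s)\<^sup>2 = 1" "(sin t)\<^sup>2 + (cos t)\<^sup>2 = 1" by simp_all
  ultimately show ?thesis unfolding norm_tc_squared by algebra
qed

lemma confocal_tangent_cross: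
  assumes "0 < ac" and "0 < bc" and "0 < ke"
    and P: "ell (ae ac ke) (be bc ke) t = ell ac bc s + l *\<^sub>R tc ac bc s"
  shows "norm (tc ac bc t) * cross (tc ac bc s) (tc (ae ac ke) (be bc ke) t)
       = ac * bc * l * norm (tc ac bc s)"
proof -
  define A B where "A = ae ac ke" and "B = be bc ke"
  define c where "c = cross (tc ac bc s) (tc A B t)"
  have "0 < A" "0 < B" using \<open>0 < ke\<close> by (simp_all add: A_def B_def ae_def be_def add_nonneg_pos)
  have x: "A * cos t = ac * cos s - l * ac * sin s" and y: "B * sin t = bc * sin s + l * bc * cos s"
    using P by (auto simp: A_def B_def ell_def tc_def prod_eq_iff)
  have A2: "A\<^sup>2 = ac\<^sup>2 + ke" and B2: "B\<^sup>2 = bc\<^sup>2 + ke"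
    using \<open>0 < ke\<close> by (simp_all add: A_def B_def ae_squared be_squared)
  have c: "c = (- ac * sin s) * (B * cos t) - (bc * cos s) * (- A * sin t)"
    by (simp add: c_def cross_def tc_def)
  have trig: "(sin s)\<^sup>2 + (cos s)\<^sup>2 = 1" "(sin t)\<^sup>2 + (cos t)\<^sup>2 = 1" by simp_all
  have "(A * B * c)\<^sup>2 = (A * B)\<^sup>2 * (ke * (norm (tc ac bc s))\<^sup>2)"
    unfolding norm_tc_squared using trig x y A2 B2 c by algebra
  then have c2: "c\<^sup>2 = ke * (norm (tc ac bc s))\<^sup>2"
    using \<open>0 < A\<close> \<open>0 < B\<close> by (simp add: power_mult_distrib)
  \<comment> \<open>The sign of c is that of l because the contact point lies inside e.\<close>
  have "2 * A * B * (l * c)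
      = B\<^sup>2 * (l * ac * sin s)\<^sup>2 + A\<^sup>2 * (l * bc * cos s)\<^sup>2 + ke * (B\<^sup>2 * (cos s)\<^sup>2 + A\<^sup>2 * (sin s)\<^sup>2)"
    using trig x y A2 B2 c by algebra
  also have "\<dots> \<ge> 0" using \<open>0 < ke\<close> by simp
  finally have "l * c \<ge> 0"
    using mult_le_cancel_left_pos[of "2 * A * B" 0 "l * c"] \<open>0 < A\<close> \<open>0 < B\<close> by simp
  then have same_sign: "(norm (tc ac bc t) * c) * (ac * bc * l * norm (tc ac bc s)) \<ge> 0"
    using assms(1,2) mult_nonneg_nonneg[of "ac * bc * norm (tc ac bc t) * norm (tc ac bc s)" "l * c"]
    by (simp add: mult_ac)
  have "(norm (tc ac bc t) * c)\<^sup>2 = (ac * bc * l * norm (tc ac bc s))\<^sup>2"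
    using c2 confocal_tangent_parameter[OF \<open>0 < ke\<close> P] by (simp add: power_mult_distrib)
  from power2_eq_imp_eq_same_sign[OF this same_sign] show ?thesis
    unfolding A_def B_def c_def .
qed

lemma dist_contact_point:
  assumes "0 < ac" and "0 < bc" and "0 < ke"
    and "on_tangent ac bc s (ell (ae ac ke) (be bc ke) t)"
  shows "dist (ell ac bc s) (ell (ae ac ke) (be bc ke) t)
       = norm (tc ac bc s) * norm (tc ac bc t) * sqrt ke / (ac * bc)"
proof -
  obtain l where P: "ell (ae ac ke) (be bc ke) t = ell ac bc s + l *\<^sub>R tc ac bc s"
    using on_tangentE assms(1,2,4) .
  have "ac * bc * \<bar>l\<bar> = sqrt ((ac * bc * l)\<^sup>2)"
    using assms(1,2) by (simp add: abs_mult)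
  also have "\<dots> = sqrt ke * norm (tc ac bc t)"
    unfolding confocal_tangent_parameter[OF \<open>0 < ke\<close> P] by (simp add: real_sqrt_mult)
  finally have "\<bar>l\<bar> = norm (tc ac bc t) * sqrt ke / (ac * bc)"
    using assms(1,2) by (simp add: field_simps)
  then show ?thesis by (simp add: P dist_norm)
qed

lemma chord_rotation_rate:
  assumes "0 < ac" and "0 < bc" and "0 < ke"
    and "on_tangent ac bc s (ell (ae ac ke) (be bc ke) t1)"
    and "on_tangent ac bc s (ell (ae ac ke) (be bc ke) t2)"
    and "ell (ae ac ke) (be bc ke) t1 \<noteq> ell (ae ac ke) (be bc ke) t2"
  shows "cross (ell (ae ac ke) (be bc ke) t2 - ell (ae ac ke) (be bc ke) t1)
            (norm (tc ac bc t2) *\<^sub>R tc (ae ac ke) (be bc ke) t2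
               - norm (tc ac bc t1) *\<^sub>R tc (ae ac ke) (be bc ke) t1)
          / (norm (ell (ae ac ke) (be bc ke) t2 - ell (ae ac ke) (be bc ke) t1))\<^sup>2
       = ac * bc / norm (tc ac bc s)"
    (is "cross ?chord ?velocity / _ = _")
proof -
  obtain l1 where P1: "ell (ae ac ke) (be bc ke) t1 = ell ac bc s + l1 *\<^sub>R tc ac bc s"
    using on_tangentE assms(1,2,4) .
  obtain l2 where P2: "ell (ae ac ke) (be bc ke) t2 = ell ac bc s + l2 *\<^sub>R tc ac bc s"
    using on_tangentE assms(1,2,5) .
  have "l1 \<noteq> l2" using assms(6) P1 P2 by auto
  have "0 < norm (tc ac bc s)" using norm_tc_pos assms(1,2) .
  have chord: "?chord = (l2 - l1) *\<^sub>R tc ac bc s"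
    by (simp add: P1 P2 algebra_simps)
  have "cross ?chord ?velocity
      = (l2 - l1) * (norm (tc ac bc t2) * cross (tc ac bc s) (tc (ae ac ke) (be bc ke) t2)
                     - norm (tc ac bc t1) * cross (tc ac bc s) (tc (ae ac ke) (be bc ke) t1))"
    unfolding chord cross_diff_right cross_scaleR_right cross_scaleR_left by (simp add: algebra_simps)
  also have "\<dots> = (l2 - l1)\<^sup>2 * (ac * bc * norm (tc ac bc s))"
    unfolding confocal_tangent_cross[OF assms(1-3) P1] confocal_tangent_cross[OF assms(1-3) P2]
    by (simp add: algebra_simps power2_eq_square)
  moreover have "(norm ?chord)\<^sup>2 = (l2 - l1)\<^sup>2 * (norm (tc ac bc s))\<^sup>2"
    by (simp add: chord power_mult_distrib)
  ultimately show ?thesis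
    using \<open>l1 \<noteq> l2\<close> \<open>0 < norm (tc ac bc s)\<close> by (simp add: power2_eq_square)
qed

lemma angle_lift_exists:
  assumes "continuous_on I d" and "convex I" and "\<forall>u\<in>I. d u \<noteq> 0"
  shows "\<exists>\<theta>. angle_lift I d \<theta>"
proof -
  define f where "f u = Complex (fst (d u)) (snd (d u))" for u
  have "continuous_on I f"
    unfolding f_def using assms(1) by (intro continuous_on_Complex continuous_intros)
  moreover have "f u \<noteq> 0" if "u \<in> I" for u
    using assms(3) that by (auto simp: f_def complex_eq_iff prod_eq_iff)
  ultimately obtain g where "continuous_on I g" and fg: "\<And>u. u \<in> I \<Longrightarrow> f u = exp (g u)"
    using continuous_logarithm_on_contractible convex_imp_contractible[OF assms(2)] by metis
  have "angle_lift I d (\<lambda>u. Im (g u))"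
    unfolding angle_lift_def
  proof (intro conjI ballI)
    show "continuous_on I (\<lambda>u. Im (g u))"
      using \<open>continuous_on I g\<close> by (intro continuous_intros)
  next
    fix u assume "u \<in> I"
    have "norm (d u) = cmod (f u)"
      by (simp add: f_def norm_prod_def complex_norm)
    then have "norm (d u) = exp (Re (g u))"
      by (simp add: fg[OF \<open>u \<in> I\<close>] norm_exp_eq_Re)
    moreover have "fst (d u) = exp (Re (g u)) * cos (Im (g u))"
      using arg_cong[OF fg[OF \<open>u \<in> I\<close>], of Re] by (simp add: f_def Re_exp)
    moreover have "snd (d u) = exp (Re (g u)) * sin (Im (g u))"
      using arg_cong[OF fg[OF \<open>u \<in> I\<close>], of Im] by (simp add: f_def Im_exp)
    ultimately show "d u = (norm (d u) * cos (Im (g u)), norm (d u) * sin (Im (g u)))"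
      by (simp add: prod_eq_iff)
  qed
  then show ?thesis by blast
qed

lemma angle_lift_local_arctan:
  assumes lift: "angle_lift I d \<theta>" and "open I" and "u0 \<in> I" and nz: "\<forall>u\<in>I. d u \<noteq> 0"
  defines "e \<equiv> (cos (\<theta> u0), sin (\<theta> u0))"
  obtains S where "open S" and "u0 \<in> S"
    and "\<And>u. u \<in> S \<Longrightarrow> \<theta> u = \<theta> u0 + arctan (cross e (d u) / (e \<bullet> d u))"
proof
  define S where "S = \<theta> -` {\<theta> u0 - pi/2 <..< \<theta> u0 + pi/2} \<inter> I"
  show "open S"
    using lift \<open>open I\<close> unfolding S_def angle_lift_def continuous_on_open_vimage[OF \<open>open I\<close>]
    by simp
  show "u0 \<in> S" using \<open>u0 \<in> I\<close> by (simp add: S_def)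
  fix u assume "u \<in> S"
  then have "u \<in> I" and small: "- (pi/2) < \<theta> u - \<theta> u0" "\<theta> u - \<theta> u0 < pi/2"
    by (auto simp: S_def)
  have polar: "d u = (norm (d u) * cos (\<theta> u), norm (d u) * sin (\<theta> u))"
    using lift \<open>u \<in> I\<close> by (simp add: angle_lift_def)
  have "e \<bullet> d u = norm (d u) * cos (\<theta> u - \<theta> u0)"
    by (subst polar) (simp add: e_def inner_Pair cos_diff algebra_simps)
  moreover have "cross e (d u) = norm (d u) * sin (\<theta> u - \<theta> u0)"
    by (subst polar) (simp add: e_def cross_def sin_diff algebra_simps)
  moreover have "0 < norm (d u)" using nz \<open>u \<in> I\<close> by simp
  moreover have "0 < cos (\<theta> u - \<theta> u0)" using small by (intro cos_gt_zero_pi) auto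
  ultimately have "cross e (d u) / (e \<bullet> d u) = tan (\<theta> u - \<theta> u0)"
    by (simp add: tan_def)
  then show "\<theta> u = \<theta> u0 + arctan (cross e (d u) / (e \<bullet> d u))"
    using arctan_tan[of "\<theta> u - \<theta> u0"] small by simp
qed

lemma angle_lift_has_real_derivative:
  assumes lift: "angle_lift I d \<theta>" and "open I" and "u0 \<in> I" and nz: "\<forall>u\<in>I. d u \<noteq> 0"
    and d': "(d has_vector_derivative d') (at u0)"
  shows "(\<theta> has_real_derivative cross (d u0) d' / (norm (d u0))\<^sup>2) (at u0)"
proof -
  define e where "e = (cos (\<theta> u0), sin (\<theta> u0))"
  define r where "r = norm (d u0)"
  obtain S where "open S" "u0 \<in> S"
    and local: "\<And>u. u \<in> S \<Longrightarrow> \<theta> u = \<theta> u0 + arctan (cross e (d u) / (e \<bullet> d u))"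
    using angle_lift_local_arctan[OF assms(1-4)] unfolding e_def by blast
  have "0 < r" using nz \<open>u0 \<in> I\<close> by (simp add: r_def)
  have d0: "d u0 = r *\<^sub>R e"
    using lift \<open>u0 \<in> I\<close> by (simp add: angle_lift_def e_def r_def)
  have p0: "e \<bullet> d u0 = r"
    using sin_cos_squared_add[of "\<theta> u0"] by (simp add: d0 e_def inner_Pair, algebra)
  have q0: "cross e (d u0) = 0"
    by (simp add: d0 e_def cross_def)
  have dp: "((\<lambda>u. e \<bullet> d u) has_real_derivative e \<bullet> d') (at u0)"
    unfolding inner_prod_def
    by (auto intro!: derivative_eq_intros has_vector_derivative_fst_snd[OF d'])
  have dq: "((\<lambda>u. cross e (d u)) has_real_derivative cross e d') (at u0)"
    unfolding cross_def
    by (auto intro!: derivative_eq_intros has_vector_derivative_fst_snd[OF d'])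
  have "((\<lambda>u. cross e (d u) / (e \<bullet> d u)) has_real_derivative cross e d' / r) (at u0)"
    using DERIV_divide[OF dq dp] p0 q0 \<open>0 < r\<close>
    by (simp add: power2_eq_square)
  then have "((\<lambda>u. \<theta> u0 + arctan (cross e (d u) / (e \<bullet> d u))) has_real_derivative
      0 + inverse (1 + (cross e (d u0) / (e \<bullet> d u0))\<^sup>2) * (cross e d' / r)) (at u0)"
    by (intro DERIV_add DERIV_const DERIV_chain2[OF DERIV_arctan])
  then have "((\<lambda>u. \<theta> u0 + arctan (cross e (d u) / (e \<bullet> d u))) has_real_derivative cross e d' / r) (at u0)"
    using q0 by simp
  then have "(\<theta> has_real_derivative cross e d' / r) (at u0)"
    by (rule has_field_derivative_transform_within_open[OF _ \<open>open S\<close> \<open>u0 \<in> S\<close>]) (simp add: local)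
  moreover have "cross (d u0) d' / (norm (d u0))\<^sup>2 = cross e d' / r"
    unfolding r_def[symmetric] using \<open>0 < r\<close>
    by (subst d0) (simp add: cross_scaleR_left power2_eq_square)
  ultimately show ?thesis by simp
qed

lemma has_angular_velocity_cross:
  assumes "open I" and "convex I" and "continuous_on I d" and "\<forall>u\<in>I. d u \<noteq> 0"
    and "u0 \<in> I" and "(d has_vector_derivative d') (at u0)"
  shows "has_angular_velocity I d (cross (d u0) d' / (norm (d u0))\<^sup>2) u0"
  unfolding has_angular_velocity_def
  using angle_lift_exists[OF assms(3,2,4)] angle_lift_has_real_derivative[OF _ assms(1,5,4,6)]
  by blast

lemma canonical_motion_vertex_velocity:
  assumes "canonical_motion ac bc ke I T TP" and "u0 \<in> I"
  shows "((\<lambda>u. vert ac bc ke (T u) i) has_vector_derivative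
           norm (tc ac bc (T u0 i)) *\<^sub>R tc (ae ac ke) (be bc ke) (T u0 i)) (at u0)"
proof -
  have "((\<lambda>u. T u i) has_vector_derivative norm (tc ac bc (T u0 i))) (at u0)"
    using assms unfolding canonical_motion_def has_real_derivative_iff_has_vector_derivative by blast
  from vector_diff_chain_at[OF this has_vector_derivative_ell] show ?thesis
    by (simp add: vert_def o_def)
qed

lemma canonical_motion_side_angular_velocity:
  assumes "0 < ac" and "0 < bc" and "0 < ke" and "open I" and "convex I"
    and motion: "canonical_motion ac bc ke I T TP" and "u0 \<in> I"
  shows "has_angular_velocity I (\<lambda>u. vert ac bc ke (T u) (Suc i) - vert ac bc ke (T u) i)
           (ac * bc / norm (tc ac bc (TP u0 i))) u0"
proof -
  define d where "d u = vert ac bc ke (T u) (Suc i) - vert ac bc ke (T u) i" for u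
  define d' where "d' u = norm (tc ac bc (T u (Suc i))) *\<^sub>R tc (ae ac ke) (be bc ke) (T u (Suc i))
                         - norm (tc ac bc (T u i)) *\<^sub>R tc (ae ac ke) (be bc ke) (T u i)" for u
  have velocity: "(d has_vector_derivative d' u) (at u)" if "u \<in> I" for u
    unfolding d_def[abs_def] d'_def
    by (intro has_vector_derivative_diff canonical_motion_vertex_velocity[OF motion that])
  then have "continuous_on I d"
    by (blast intro: continuous_at_imp_continuous_on has_vector_derivative_continuous)
  moreover have "\<forall>u\<in>I. d u \<noteq> 0"
  proof
    fix u assume "u \<in> I"
    then have "is_billiard ac bc ke (T u)" using motion by (simp add: canonical_motion_def)
    then show "d u \<noteq> 0" unfolding is_billiard_def d_def by (metis eq_iff_diff_eq_0)
  qed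
  ultimately have "has_angular_velocity I d (cross (d u0) (d' u0) / (norm (d u0))\<^sup>2) u0"
    using has_angular_velocity_cross[OF \<open>open I\<close> \<open>convex I\<close>] velocity \<open>u0 \<in> I\<close> by blast
  moreover have "cross (d u0) (d' u0) / (norm (d u0))\<^sup>2 = ac * bc / norm (tc ac bc (TP u0 i))"
  proof -
    have "is_billiard ac bc ke (T u0)" and "contact_params ac bc ke (T u0) (TP u0)"
      using motion \<open>u0 \<in> I\<close> by (simp_all add: canonical_motion_def)
    then have "on_tangent ac bc (TP u0 i) (ell (ae ac ke) (be bc ke) (T u0 i))"
      and "on_tangent ac bc (TP u0 i) (ell (ae ac ke) (be bc ke) (T u0 (Suc i)))"
      and "ell (ae ac ke) (be bc ke) (T u0 i) \<noteq> ell (ae ac ke) (be bc ke) (T u0 (Suc i))"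
      unfolding is_billiard_def contact_params_def vert_def by blast+
    then show ?thesis
      unfolding d_def d'_def vert_def by (rule chord_rotation_rate[OF assms(1-3)])
  qed
  ultimately show ?thesis by (simp add: d_def[abs_def])
qed

theorem lemma1:
  fixes ac bc ke :: real and t tp :: "nat \<Rightarrow> real"
    and T TP :: "real \<Rightarrow> nat \<Rightarrow> real" and \<alpha> \<beta> :: real
  assumes "ac > bc" and "bc > 0" and "ke > 0"
    and "is_billiard ac bc ke t" and "contact_params ac bc ke t tp"
    and "canonical_motion ac bc ke {\<alpha><..<\<beta>} T TP"
  shows "(\<forall>i\<ge>1.
            dist (ell ac bc (tp (i - 1))) (vert ac bc ke t i)
              = norm (tc ac bc (tp (i - 1))) * norm (tc ac bc (t i)) * sqrt ke / (ac * bc)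
          \<and> dist (vert ac bc ke t i) (ell ac bc (tp i))
              = norm (tc ac bc (t i)) * norm (tc ac bc (tp i)) * sqrt ke / (ac * bc))
       \<and> (\<forall>u0\<in>{\<alpha><..<\<beta>}. \<forall>i.
            has_angular_velocity {\<alpha><..<\<beta>}
              (\<lambda>u. vert ac bc ke (T u) (Suc i) - vert ac bc ke (T u) i)
              (ac * bc / norm (tc ac bc (TP u0 i))) u0
          \<and> ac * bc / norm (tc ac bc (TP u0 i)) = ac * bc / sqrt (- kh ac bc (TP u0 i)))"
proof (intro conjI allI impI ballI)
  have pos: "0 < ac" "0 < bc" "0 < ke" using assms(1-3) by auto
  \<comment> \<open>The lengths only use the tangency of the sides.\<close>
  have tangent: "on_tangent ac bc (tp j) (ell (ae ac ke) (be bc ke) (t j))"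
    "on_tangent ac bc (tp j) (ell (ae ac ke) (be bc ke) (t (Suc j)))" for j
    using assms(5) by (simp_all add: contact_params_def vert_def)
  fix i :: nat
  assume "1 \<le> i"
  then show "dist (ell ac bc (tp (i - 1))) (vert ac bc ke t i)
      = norm (tc ac bc (tp (i - 1))) * norm (tc ac bc (t i)) * sqrt ke / (ac * bc)"
    using dist_contact_point[OF pos tangent(2)[of "i - 1"]] by (simp add: vert_def)
  show "dist (vert ac bc ke t i) (ell ac bc (tp i))
      = norm (tc ac bc (t i)) * norm (tc ac bc (tp i)) * sqrt ke / (ac * bc)"
    using dist_contact_point[OF pos tangent(1)[of i]] by (simp add: vert_def dist_commute mult.commute)
next
  fix u0 i assume "u0 \<in> {\<alpha><..<\<beta>}"
  then show "has_angular_velocity {\<alpha><..<\<beta>} (\<lambda>u. vert ac bc ke (T u) (Suc i) - vert ac bc ke (T u) i)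
      (ac * bc / norm (tc ac bc (TP u0 i))) u0"
    using canonical_motion_side_angular_velocity[OF _ _ _ _ _ assms(6)] assms(1-3) by simp
  show "ac * bc / norm (tc ac bc (TP u0 i)) = ac * bc / sqrt (- kh ac bc (TP u0 i))"
    by (simp add: kh_def)
qed

end
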